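(* Fix $p\in(\tfrac12,1)$. For each $n$ and $B\in\{1,\dots,n\}$ let $\theta(B,n)$ be the correctness index of the crowdfunding game $\Gamma(B,n)$ (defined in the context). Then $$\lim_{n\to\infty}\ \max_{B\in\{1,\dots,n\}}\theta(B,n)=\frac{3p-1}{2p}\ (<1).$$
   Context: The crowdfunding game $\Gamma(B,n)$ with parameter $p\in(\tfrac12,1)$: there are $n$ players and a threshold $B\in\{1,\dots,n\}$. A state $\omega\in\{H,L\}$ is drawn with probability $\tfrac12$ each. Conditional on $\omega$, each player $i$ independently receives a signal $s_i\in\{H,L\}$ with $\Pr(s_i=\omega\mid\omega)=p$. Players simultaneously choose $a_i\in\{0,1\}$. Player $i$'s payoff is $1$ if $a_i=1$, $\sum_j a_j\ge B$ and $\omega=H$; $-1$ if $a_i=1$, $\sum_j a_j\ge B$ and $\omega=L$; and $0$ otherwise. A strategy is a map $\sigma_i:\{H,L\}\to[0,1]$ giving the probability of action $1$ after each signal; Bayes-Nash equilibrium is defined as usual. A profile is non-trivial if $\Pr_\sigma(\sum_i a_i\ge B)>0$, and symmetric if all players use the same strategy. It is known that each $\Gamma(B,n)$ has a unique symmetric non-trivial Bayes-Nash equilibrium $\sigma$. The correctness index is $\theta(B,n)=\tfrac12\Pr_\sigma(\sum_{i}a_i\ge B\mid\omega=H)+\tfrac12\Pr_\sigma(\sum_i a_i<B\mid\omega=L)$, computed under this unique equilibrium $\sigma$. *)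

theory Defs
  imports "HOL-Probability.Probability"
begin

text \<open>Crowdfunding game Gamma(B,n) with signal precision p.
  Players are 0..n-1. States and signals: True = H, False = L.
  A strategy is a map bool => real (probability of action 1 after each signal),
  a profile assigns a strategy to each player.\<close>

definition is_strategy :: "(bool \<Rightarrow> real) \<Rightarrow> bool" where
  "is_strategy f \<longleftrightarrow> (\<forall>s. 0 \<le> f s \<and> f s \<le> 1)"

definition game_pmf :: "real \<Rightarrow> nat \<Rightarrow> (nat \<Rightarrow> bool \<Rightarrow> real)
    \<Rightarrow> (bool \<times> (nat \<Rightarrow> bool) \<times> (nat \<Rightarrow> bool)) pmf" where
  "game_pmf p n \<sigma> =
     bind_pmf (bernoulli_pmf (1/2)) (\<lambda>\<omega>.
     bind_pmf (Pi_pmf {..<n} False (\<lambda>i. bernoulli_pmf (if \<omega> then p else 1 - p))) (\<lambda>s.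
     bind_pmf (Pi_pmf {..<n} False (\<lambda>i. bernoulli_pmf (\<sigma> i (s i)))) (\<lambda>a.
     return_pmf (\<omega>, s, a))))"

definition num_contrib :: "nat \<Rightarrow> (nat \<Rightarrow> bool) \<Rightarrow> nat" where
  "num_contrib n a = card {j. j < n \<and> a j}"

definition payoff :: "nat \<Rightarrow> nat \<Rightarrow> nat \<Rightarrow> bool \<times> (nat \<Rightarrow> bool) \<times> (nat \<Rightarrow> bool) \<Rightarrow> real" where
  "payoff B n i x = (case x of (\<omega>, s, a) \<Rightarrow>
     (if a i \<and> num_contrib n a \<ge> B then (if \<omega> then 1 else -1) else 0))"

definition exp_payoff :: "real \<Rightarrow> nat \<Rightarrow> nat \<Rightarrow> (nat \<Rightarrow> bool \<Rightarrow> real) \<Rightarrow> nat \<Rightarrow> real" where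
  "exp_payoff p B n \<sigma> i = measure_pmf.expectation (game_pmf p n \<sigma>) (payoff B n i)"

definition is_BNE :: "real \<Rightarrow> nat \<Rightarrow> nat \<Rightarrow> (nat \<Rightarrow> bool \<Rightarrow> real) \<Rightarrow> bool" where
  "is_BNE p B n \<sigma> \<longleftrightarrow> (\<forall>i<n. is_strategy (\<sigma> i)) \<and>
     (\<forall>i<n. \<forall>\<tau>. is_strategy \<tau> \<longrightarrow> exp_payoff p B n (\<sigma>(i := \<tau>)) i \<le> exp_payoff p B n \<sigma> i)"

definition nontrivial :: "real \<Rightarrow> nat \<Rightarrow> nat \<Rightarrow> (nat \<Rightarrow> bool \<Rightarrow> real) \<Rightarrow> bool" where
  "nontrivial p B n \<sigma> \<longleftrightarrow>
     measure_pmf.prob (game_pmf p n \<sigma>) {(\<omega>, s, a). num_contrib n a \<ge> B} > 0"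

definition sym_eq :: "real \<Rightarrow> nat \<Rightarrow> nat \<Rightarrow> bool \<Rightarrow> real" where
  "sym_eq p B n = (THE f. is_strategy f \<and> is_BNE p B n (\<lambda>_. f) \<and> nontrivial p B n (\<lambda>_. f))"

definition theta :: "real \<Rightarrow> nat \<Rightarrow> nat \<Rightarrow> real" where
  "theta p B n = (let M = game_pmf p n (\<lambda>_. sym_eq p B n) in
     1/2 * (measure_pmf.prob M {(\<omega>, s, a). \<omega> \<and> num_contrib n a \<ge> B}
             / measure_pmf.prob M {(\<omega>, s, a). \<omega>})
   + 1/2 * (measure_pmf.prob M {(\<omega>, s, a). \<not> \<omega> \<and> num_contrib n a < B}
             / measure_pmf.prob M {(\<omega>, s, a). \<not> \<omega>}))"

end

theory Submission
  imports Defs "HOL-Real_Asymp.Real_Asymp"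
begin

text \<open>In the symmetric nontrivial equilibrium every player contributes after a high signal, and
  after a low signal with the probability \<open>l\<close> that leaves a low-signal player indifferent (or
  \<open>l = 0\<close>); uniqueness of \<open>l\<close> comes from the increasing reversed hazard rate of the binomial
  distribution. With \<open>a = p + (1-p) l\<close> and \<open>b = 1-p + p l\<close> the contribution probabilities in
  the two states, \<open>\<theta> = (P(Bin(n,a) \<ge> B) + 1 - P(Bin(n,b) \<ge> B)) / 2\<close>, and indifference reads
  \<open>(1-p) P(Bin(n-1,a) \<ge> B-1) \<le> p P(Bin(n-1,b) \<ge> B-1)\<close>. This caps \<open>\<theta>\<close> by \<open>(3p-1)/(2p)\<close> up
  to a single binomial term, and these terms vanish uniformly in \<open>B\<close> as \<open>n \<rightarrow> \<infinity>\<close>. Conversely, at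
  the majority threshold \<open>B = n div 2 + 1\<close> indifference and Hoeffding's inequality show that
  \<open>\<theta>\<close> approaches \<open>(3p-1)/(2p)\<close>.\<close>

section \<open>Binomial tails as polynomials\<close>

text \<open>\<open>P(X = k)\<close> and \<open>P(X \<ge> k)\<close> for \<open>X\<close> binomially distributed with parameters \<open>m\<close> and \<open>x\<close>,
  as polynomials in \<open>x\<close> so that they can be differentiated in \<open>x\<close>.\<close>

definition binom_term :: "nat \<Rightarrow> real \<Rightarrow> nat \<Rightarrow> real" where
  "binom_term m x k = real (m choose k) * x^k * (1-x)^(m-k)"

definition binom_tail :: "nat \<Rightarrow> real \<Rightarrow> nat \<Rightarrow> real" where
  "binom_tail m x k = (\<Sum>j=k..m. binom_term m x j)"

lemma binom_tail_0 [simp]: "binom_tail m x 0 = 1"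
proof -
  have "binom_tail m x 0 = (\<Sum>j\<le>m. real (m choose j) * x^j * (1-x)^(m-j))"
    unfolding binom_tail_def binom_term_def by (simp add: atLeast0AtMost)
  also have "\<dots> = (x + (1-x))^m" by (subst binomial_ring) simp
  finally show ?thesis by simp
qed

lemma binom_tail_unfold: "k \<le> m \<Longrightarrow> binom_tail m x k = binom_term m x k + binom_tail m x (Suc k)"
  unfolding binom_tail_def by (simp add: sum.atLeast_Suc_atMost)

lemma binom_tail_eq_0: "m < k \<Longrightarrow> binom_tail m x k = 0"
  unfolding binom_tail_def by simp

lemma binom_term_nonneg: "0 \<le> x \<Longrightarrow> x \<le> 1 \<Longrightarrow> 0 \<le> binom_term m x k"
  unfolding binom_term_def by simp

lemma binom_term_pos: "0 < x \<Longrightarrow> x < 1 \<Longrightarrow> k \<le> m \<Longrightarrow> 0 < binom_term m x k"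
  unfolding binom_term_def by simp

lemma binom_tail_nonneg: "0 \<le> x \<Longrightarrow> x \<le> 1 \<Longrightarrow> 0 \<le> binom_tail m x k"
  unfolding binom_tail_def by (intro sum_nonneg binom_term_nonneg)

lemma sum_binom_term_le_1:
  assumes "0 \<le> x" "x \<le> 1" "S \<subseteq> {..m}"
  shows "(\<Sum>j\<in>S. binom_term m x j) \<le> 1"
proof -
  have "(\<Sum>j\<in>S. binom_term m x j) \<le> (\<Sum>j=0..m. binom_term m x j)"
    by (rule sum_mono2) (use assms in \<open>auto intro: binom_term_nonneg\<close>)
  also have "\<dots> = 1" using binom_tail_0[of m x] unfolding binom_tail_def .
  finally show ?thesis .
qed

lemma binom_tail_le_1: "0 \<le> x \<Longrightarrow> x \<le> 1 \<Longrightarrow> binom_tail m x k \<le> 1"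
  unfolding binom_tail_def by (rule sum_binom_term_le_1) auto

lemma binom_term_le_1: "0 \<le> x \<Longrightarrow> x \<le> 1 \<Longrightarrow> binom_term m x k \<le> 1"
  using sum_binom_term_le_1[of x "{k}" m] by (cases "k \<le> m") (auto simp: binom_term_def binomial_eq_0)

lemma binom_tail_at_1: "k \<le> m \<Longrightarrow> binom_tail m 1 k = 1"
proof -
  assume "k \<le> m"
  have "binom_tail m 1 k = (\<Sum>j\<in>{m}. binom_term m 1 j)"
    unfolding binom_tail_def by (rule sum.mono_neutral_right) (use \<open>k \<le> m\<close> in \<open>auto simp: binom_term_def\<close>)
  thus ?thesis by (simp add: binom_term_def)
qed

lemma binom_tail_at_0: "1 \<le> k \<Longrightarrow> binom_tail m 0 k = 0"
  unfolding binom_tail_def binom_term_def by (intro sum.neutral) auto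

lemma binom_tail_pos: "0 < x \<Longrightarrow> x \<le> 1 \<Longrightarrow> k \<le> m \<Longrightarrow> 0 < binom_tail m x k"
proof -
  assume x: "0 < x" "x \<le> 1" and k: "k \<le> m"
  have "0 < (\<Sum>j\<in>{m}. binom_term m x j)" using x by (simp add: binom_term_def)
  also have "\<dots> \<le> binom_tail m x k"
    unfolding binom_tail_def by (rule sum_mono2) (use x k in \<open>auto intro: binom_term_nonneg\<close>)
  finally show ?thesis .
qed

lemma binom_tail_continuous_on: "continuous_on A (\<lambda>x. binom_tail m x k)"
  unfolding binom_tail_def binom_term_def by (intro continuous_intros)

lemma binom_tail_eq_prob:
  assumes "0 \<le> x" "x \<le> 1"
  shows "binom_tail m x k = measure_pmf.prob (binomial_pmf m x) {k..}"
proof -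
  have "set_pmf (binomial_pmf m x) \<subseteq> {..m}"
    using assms by (auto simp: set_pmf_binomial_eq split: if_splits)
  hence "{k..} \<inter> set_pmf (binomial_pmf m x) = {k..m} \<inter> set_pmf (binomial_pmf m x)" by auto
  hence "measure_pmf.prob (binomial_pmf m x) {k..} = measure_pmf.prob (binomial_pmf m x) {k..m}"
    by (metis measure_Int_set_pmf)
  also have "\<dots> = binom_tail m x k"
    using assms by (simp add: measure_measure_pmf_finite binom_tail_def binom_term_def pmf_binomial)
  finally show ?thesis ..
qed

lemma binom_tail_Suc_Suc:
  assumes "k \<le> m"
  shows "binom_tail (Suc m) x (Suc k) = binom_tail m x k - (1-x) * binom_term m x k"
proof -
  have pascal: "binom_term (Suc m) x (Suc j) = x * binom_term m x j + (1-x) * binom_term m x (Suc j)"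
    if "j \<le> m" for j
  proof (cases "j = m")
    case False
    hence "m - j = Suc (m - Suc j)" using that by simp
    thus ?thesis using that by (simp add: binom_term_def algebra_simps)
  qed (simp add: binom_term_def)
  have "binom_tail (Suc m) x (Suc k) = (\<Sum>j=k..m. binom_term (Suc m) x (Suc j))"
    unfolding binom_tail_def sum.shift_bounds_cl_Suc_ivl by simp
  also have "\<dots> = x * binom_tail m x k + (1-x) * (\<Sum>j=k..m. binom_term m x (Suc j))"
    unfolding binom_tail_def by (simp add: pascal sum.distrib sum_distrib_left)
  also have "(\<Sum>j=k..m. binom_term m x (Suc j)) = (\<Sum>j=Suc k..Suc m. binom_term m x j)"
    by (rule sum.shift_bounds_cl_Suc_ivl[symmetric])
  also have "\<dots> = binom_tail m x (Suc k)"
    using assms by (simp add: binom_tail_def binom_term_def)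
  also have "binom_tail m x (Suc k) = binom_tail m x k - binom_term m x k"
    using binom_tail_unfold[OF assms] by simp
  finally show ?thesis by (simp add: algebra_simps)
qed

lemma binom_tail_has_real_derivative:
  assumes "1 \<le> k" "k \<le> m"
  shows "((\<lambda>x. binom_tail m x k) has_real_derivative real m * binom_term (m-1) x (k-1)) (at x)"
  using assms
proof (induction "m - k" arbitrary: k)
  case 0
  hence "k = m" by simp
  hence "(\<lambda>x. binom_tail m x k) = (\<lambda>x. x^m)"
    by (auto simp: fun_eq_iff binom_tail_def binom_term_def)
  thus ?case using \<open>k = m\<close> \<open>1 \<le> k\<close> by (auto intro!: derivative_eq_intros simp: binom_term_def)
next
  case (Suc d)
  obtain k' where k': "k = Suc k'" using Suc.prems by (cases k) auto
  have d: "m - k = Suc d" "m - Suc k = d" using Suc.hyps by simp_all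
  have IH: "((\<lambda>x. binom_tail m x (Suc k)) has_real_derivative real m * binom_term (m-1) x k) (at x)"
    using Suc.hyps(1)[of "Suc k"] Suc.hyps(2) Suc.prems by simp
  have term_eq: "(\<lambda>x. binom_term m x k) = (\<lambda>x. real (m choose k) * (x^(Suc k') * (1-x)^(Suc d)))"
    using d(1) k' by (simp add: fun_eq_iff binom_term_def)
  have "((\<lambda>x. real (m choose k) * (x^(Suc k') * (1-x)^(Suc d))) has_real_derivative
      real (m choose k) * (x^(Suc k') * (real (Suc d) * (1-x)^d * (-1)) + real (Suc k') * x^k' * (1-x)^(Suc d))) (at x)"
    by (intro DERIV_cmult DERIV_mult' DERIV_pow DERIV_power derivative_eq_intros) auto
  hence term_deriv: "((\<lambda>x. binom_term m x k) has_real_derivative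
      real (m choose k) * (real k * x^k' * (1-x)^(Suc d) - x^k * (real (Suc d) * (1-x)^d))) (at x)"
    unfolding term_eq by (rule DERIV_cong) (simp add: k' algebra_simps)
  have c1: "real k * real (m choose k) = real m * real ((m-1) choose k')"
    using binomial_absorption[of k' m] k' by (metis of_nat_mult)
  have c2: "real (Suc d) * real (m choose k) = real m * real ((m-1) choose k)"
    using binomial_absorb_comp[of m k] d(1) by (metis of_nat_mult)
  have "real (m choose k) * (real k * x^k' * (1-x)^(Suc d) - x^k * (real (Suc d) * (1-x)^d))
      + real m * binom_term (m-1) x k
    = (real k * real (m choose k)) * x^k' * (1-x)^(Suc d)
      - (real (Suc d) * real (m choose k)) * x^k * (1-x)^d + real m * binom_term (m-1) x k"
    by (simp add: algebra_simps)
  also have "\<dots> = real m * binom_term (m-1) x (k-1)"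
    unfolding c1 c2 using d k' by (simp add: binom_term_def algebra_simps)
  finally have sum_eq: "real (m choose k) * (real k * x^k' * (1-x)^(Suc d) - x^k * (real (Suc d) * (1-x)^d))
      + real m * binom_term (m-1) x k = real m * binom_term (m-1) x (k-1)" .
  have "(\<lambda>x. binom_tail m x k) = (\<lambda>x. binom_term m x k + binom_tail m x (Suc k))"
    using binom_tail_unfold[OF Suc.prems(2)] by (simp add: fun_eq_iff)
  thus ?case using DERIV_add[OF term_deriv IH] sum_eq by simp
qed

lemma binom_tail_mono:
  assumes "0 \<le> x" "x \<le> y" "y \<le> 1"
  shows "binom_tail m x k \<le> binom_tail m y k"
proof (cases "1 \<le> k \<and> k \<le> m")
  case True
  show ?thesis
    by (rule DERIV_nonneg_imp_nondecreasing[OF assms(2)])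
       (use assms True in \<open>auto intro!: exI binom_tail_has_real_derivative mult_nonneg_nonneg binom_term_nonneg\<close>)
next
  case False
  thus ?thesis by (auto simp: binom_tail_eq_0 not_le le_Suc_eq)
qed

lemma binom_tail_factor:
  assumes k: "1 \<le> k" "k \<le> m" and x: "0 < x" "x < 1"
  shows "binom_tail m x k = x^(k-1) * (1-x)^(m-k) *
           (\<Sum>j=k..m. real (m choose j) * x^(j-k+1) / (1-x)^(j-k))"
  unfolding binom_tail_def sum_distrib_left
proof (rule sum.cong[OF refl])
  fix j assume j: "j \<in> {k..m}"
  have "(k-1) + (j-k+1) = j" "(m-j) + (j-k) = m-k" using j k by auto
  hence "x^j = x^(k-1) * x^(j-k+1)" and "(1-x)^(m-k) = (1-x)^(m-j) * (1-x)^(j-k)"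
    by (metis power_add)+
  moreover have "(1-x)^(j-k) > 0" using x by simp
  ultimately show "binom_term m x j =
      x^(k-1) * (1-x)^(m-k) * (real (m choose j) * x^(j-k+1) / (1-x)^(j-k))"
    unfolding binom_term_def using x by (simp add: field_simps)
qed

text \<open>The tail grows relative to its derivative: the binomial distribution has an increasing
  reversed hazard rate.\<close>

lemma binom_tail_term_ratio_mono:
  assumes k: "1 \<le> k" "k \<le> m" and xy: "0 < x" "x \<le> y" "y < 1"
  shows "binom_term (m-1) y (k-1) * binom_tail m x k \<le> binom_term (m-1) x (k-1) * binom_tail m y k"
proof -
  define S where "S = (\<lambda>x. (\<Sum>j=k..m. real (m choose j) * x^(j-k+1) / (1-x)^(j-k)))"
  have "S x \<le> S y" unfolding S_def
  proof (rule sum_mono)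
    fix j assume j: "j \<in> {k..m}"
    have "x^(j-k+1) \<le> y^(j-k+1)" by (rule power_mono) (use xy in auto)
    moreover have "(1-y)^(j-k) \<le> (1-x)^(j-k)" by (rule power_mono) (use xy in auto)
    moreover have "0 < (1-y)^(j-k)" using xy by simp
    ultimately have "x^(j-k+1) / (1-x)^(j-k) \<le> y^(j-k+1) / (1-y)^(j-k)"
      using xy by (intro frac_le) auto
    thus "real (m choose j) * x^(j-k+1) / (1-x)^(j-k) \<le> real (m choose j) * y^(j-k+1) / (1-y)^(j-k)"
      by (simp add: mult_left_mono times_divide_eq_right[symmetric] del: times_divide_eq_right)
  qed
  define c where "c = real ((m-1) choose (k-1)) * (x^(k-1) * (1-x)^(m-k)) * (y^(k-1) * (1-y)^(m-k))"
  have mk: "m - 1 - (k - 1) = m - k" using k by simp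
  have "binom_term (m-1) y (k-1) * binom_tail m x k = c * S x"
    unfolding binom_tail_factor[OF k xy(1) le_less_trans[OF xy(2,3)]] binom_term_def S_def c_def mk
    by (simp add: mult_ac)
  also have "\<dots> \<le> c * S y"
    using \<open>S x \<le> S y\<close> xy unfolding c_def by (intro mult_left_mono) auto
  also have "\<dots> = binom_term (m-1) x (k-1) * binom_tail m y k"
    unfolding binom_tail_factor[OF k less_le_trans[OF xy(1,2)] xy(3)] binom_term_def S_def c_def mk
    by (simp add: mult_ac)
  finally show ?thesis .
qed

text \<open>\<open>p + (1-p) l\<close> and \<open>1-p + p l\<close> are the probabilities that a player contributes in state
  H and in state L, if she always contributes after a high signal and with probability \<open>l\<close> after
  a low one.\<close>

lemma signal_mix_bounds:
  fixes p l :: real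
  assumes p: "1/2 < p" "p < 1" and l: "0 \<le> l" "l \<le> 1"
  shows "1-p \<le> 1-p + p*l" "1-p + p*l \<le> p + (1-p)*l" "p \<le> p + (1-p)*l" "p + (1-p)*l \<le> 1"
    and "l < 1 \<Longrightarrow> p + (1-p)*l < 1"
proof -
  have "0 \<le> p*l" "0 \<le> (1-p)*l" "(1-p)*l \<le> 1-p" "(2*p-1)*l \<le> 2*p-1"
    using p l by (auto intro: mult_left_le)
  thus "1-p \<le> 1-p + p*l" "1-p + p*l \<le> p + (1-p)*l" "p \<le> p + (1-p)*l" "p + (1-p)*l \<le> 1"
    by (simp_all add: algebra_simps)
  show "l < 1 \<Longrightarrow> p + (1-p)*l < 1"
    using mult_strict_left_mono[of l 1 "1-p"] p by (simp add: algebra_simps)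
qed

lemma binom_tail_odds_strict_antimono:
  assumes k: "1 \<le> k" "k \<le> m" and p: "1/2 < p" "p < 1"
    and l: "0 \<le> l1" "l1 < l2" "l2 < 1"
  shows "binom_tail m (p + (1-p)*l2) k * binom_tail m (1-p + p*l1) k
       < binom_tail m (p + (1-p)*l1) k * binom_tail m (1-p + p*l2) k"
proof -
  define R where "R = (\<lambda>l. binom_tail m (p + (1-p)*l) k / binom_tail m (1-p + p*l) k)"
  have "R l2 < R l1"
  proof (rule DERIV_neg_imp_decreasing[OF l(2)])
    fix l assume "l1 \<le> l" "l \<le> l2"
    hence l01: "0 \<le> l" "l < 1" using l by auto
    note mix = signal_mix_bounds[OF p l01(1) less_imp_le[OF l01(2)]]
    have ab: "0 < 1-p + p*l" "1-p + p*l \<le> p + (1-p)*l" "0 < p + (1-p)*l" "p + (1-p)*l < 1"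
      using mix(1-3) mix(5)[OF l01(2)] p by linarith+
    define a b where "a = p + (1-p)*l" and "b = 1-p + p*l"
    have pos: "0 < binom_tail m a k" "0 < binom_tail m b k"
      "0 < binom_term (m-1) a (k-1)" "0 < binom_term (m-1) b (k-1)" "0 < real m"
      using ab k unfolding a_def b_def by (auto intro!: binom_tail_pos binom_term_pos)
    have hazard: "binom_term (m-1) a (k-1) * binom_tail m b k \<le> binom_term (m-1) b (k-1) * binom_tail m a k"
      using binom_tail_term_ratio_mono[OF k] ab unfolding a_def b_def by blast
    have "((\<lambda>l. binom_tail m (p + (1-p)*l) k) has_real_derivative
        real m * binom_term (m-1) a (k-1) * (1-p)) (at l)"
      unfolding a_def
      by (rule DERIV_chain2[OF binom_tail_has_real_derivative[OF k]]) (auto intro!: derivative_eq_intros)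
    moreover have "((\<lambda>l. binom_tail m (1-p + p*l) k) has_real_derivative
        real m * binom_term (m-1) b (k-1) * p) (at l)"
      unfolding b_def
      by (rule DERIV_chain2[OF binom_tail_has_real_derivative[OF k]]) (auto intro!: derivative_eq_intros)
    ultimately have D: "(R has_real_derivative
        real m * ((1-p) * binom_term (m-1) a (k-1) * binom_tail m b k
          - p * binom_term (m-1) b (k-1) * binom_tail m a k) / (binom_tail m b k)^2) (at l)"
      unfolding R_def using pos
      by (rule_tac DERIV_cong[OF DERIV_divide]) (auto simp: a_def b_def power2_eq_square algebra_simps)
    have "(1-p) * binom_term (m-1) a (k-1) * binom_tail m b k
        \<le> (1-p) * (binom_term (m-1) b (k-1) * binom_tail m a k)"
      using hazard p by (simp add: mult.assoc)
    also have "\<dots> < p * (binom_term (m-1) b (k-1) * binom_tail m a k)"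
      using p pos by (intro mult_strict_right_mono) auto
    finally have "(1-p) * binom_term (m-1) a (k-1) * binom_tail m b k
        - p * binom_term (m-1) b (k-1) * binom_tail m a k < 0" by (simp add: mult.assoc)
    hence "real m * ((1-p) * binom_term (m-1) a (k-1) * binom_tail m b k
        - p * binom_term (m-1) b (k-1) * binom_tail m a k) / (binom_tail m b k)^2 < 0"
      using pos by (intro divide_neg_pos mult_pos_neg) auto
    thus "\<exists>y. (R has_real_derivative y) (at l) \<and> y < 0" using D by blast
  qed
  moreover have "0 < binom_tail m (1-p + p*l1) k" "0 < binom_tail m (1-p + p*l2) k"
  proof -
    have "0 < 1-p + p*l" "1-p + p*l \<le> 1" if "0 \<le> l" "l \<le> 1" for l
      using signal_mix_bounds(1,2,4)[OF p that] p by linarith+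
    thus "0 < binom_tail m (1-p + p*l1) k" "0 < binom_tail m (1-p + p*l2) k"
      using l k by (simp_all add: binom_tail_pos)
  qed
  ultimately show ?thesis unfolding R_def by (simp add: divide_simps)
qed

section \<open>Binomial terms are uniformly small\<close>

lemma binom_term_Suc_ratio:
  assumes "j < m"
  shows "binom_term m x (Suc j) * (real (Suc j) * (1-x)) = binom_term m x j * (real (m-j) * x)"
proof -
  have "Suc j * (m choose Suc j) = (m - j) * (m choose j)"
    by (simp only: binomial_absorption binomial_absorb_comp)
  hence c: "real (m choose Suc j) * real (Suc j) = real (m choose j) * real (m - j)"
    by (metis of_nat_mult mult.commute)
  have "m - j = Suc (m - Suc j)" using assms by simp
  hence "(1-x)^(m-j) = (1-x) * (1-x)^(m - Suc j)" by simp
  thus ?thesis unfolding binom_term_def by (simp add: c[symmetric] mult_ac)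
qed

lemma binom_term_symmetric: "k \<le> m \<Longrightarrow> binom_term m (1-x) (m-k) = binom_term m x k"
  unfolding binom_term_def by (simp add: binomial_symmetric[symmetric] mult_ac)

lemma geometric_run_bound:
  fixes f :: "nat \<Rightarrow> real"
  assumes f0: "\<And>t. 0 \<le> f t" and \<rho>: "0 \<le> \<rho>" "\<rho> \<le> 1" and d: "1 \<le> d" "real d * (1 - \<rho>) \<le> 1/2"
    and step: "\<And>t. Suc t < d \<Longrightarrow> \<rho> * f t \<le> f (Suc t)"
    and sum: "(\<Sum>t<d. f t) \<le> 1"
  shows "f 0 \<le> 2 / real d"
proof -
  have geom: "\<rho>^t * f 0 \<le> f t" if "t < d" for t
    using that
  proof (induction t)
    case (Suc t)
    hence "\<rho> * (\<rho>^t * f 0) \<le> \<rho> * f t" using \<rho> by (intro mult_left_mono) auto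
    also have "\<dots> \<le> f (Suc t)" using step Suc.prems by simp
    finally show ?case by (simp add: mult_ac)
  qed simp
  have "1/2 \<le> \<rho>^d"
    using Bernoulli_inequality[of "\<rho> - 1" d] \<rho> d(2) by (simp add: algebra_simps)
  hence half: "1/2 \<le> \<rho>^t" if "t < d" for t
    using that \<rho> power_decreasing[of t d \<rho>] by simp
  have "(\<Sum>t<d. 1/2 * f 0) \<le> (\<Sum>t<d. f t)"
  proof (rule sum_mono)
    fix t assume "t \<in> {..<d}"
    hence "1/2 * f 0 \<le> \<rho>^t * f 0" using half f0[of 0] by (intro mult_right_mono) auto
    also have "\<dots> \<le> f t" using geom \<open>t \<in> {..<d}\<close> by simp
    finally show "1/2 * f 0 \<le> f t" .
  qed
  hence "real d * (1/2 * f 0) \<le> 1" using sum by simp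
  thus ?thesis using d(1) by (simp add: field_simps)
qed

lemma binom_term_Suc_ge:
  assumes "j < m" "0 < x" "x < 1" and ratio: "\<rho> * (real (Suc j) * (1-x)) \<le> real (m-j) * x"
  shows "\<rho> * binom_term m x j \<le> binom_term m x (Suc j)"
proof -
  have "(\<rho> * binom_term m x j) * (real (Suc j) * (1-x)) = binom_term m x j * (\<rho> * (real (Suc j) * (1-x)))"
    by (simp add: mult_ac)
  also have "\<dots> \<le> binom_term m x j * (real (m-j) * x)"
    using ratio assms by (intro mult_left_mono binom_term_nonneg) auto
  also have "\<dots> = binom_term m x (Suc j) * (real (Suc j) * (1-x))"
    using binom_term_Suc_ratio[OF assms(1)] by simp
  finally show ?thesis by (rule mult_right_le_imp_le) (use assms in simp)
qed

text \<open>If the term ratios stay close to 1 on a run of \<open>d\<close> consecutive indices, the first term is at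
  most \<open>2/d\<close>, since the terms of the run sum to at most 1.\<close>

lemma binom_term_le_ascending:
  assumes d: "1 \<le> d" and x: "0 < x" "x < 1"
    and K: "4*d*(d+1) \<le> k" and R: "4*d*(d+1) \<le> m - k + 1" and k: "k \<le> m"
    and slope: "real k * (1-x) \<le> real (m-k+1) * x"
  shows "binom_term m x k \<le> 2 / real d"
proof -
  have "real (4*d*(d+1)) \<le> real k" "real (4*d*(d+1)) \<le> real (m-k+1)"
    using K R by (simp_all only: of_nat_le_iff)
  hence KR: "4 * real d * (real d + 1) \<le> real k" "4 * real d * (real d + 1) \<le> real (m-k+1)"
    by (simp_all add: algebra_simps)
  have d0: "0 < real d" using d by simp
  hence "0 < 4 * real d * (real d + 1)" by simp
  hence pos: "0 < real k" "0 < real (m-k+1)" using KR by linarith+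
  define \<alpha> \<beta> where "\<alpha> = (real d + 1) / real (m-k+1)" and "\<beta> = (real d + 1) / real k"
  define \<rho> where "\<rho> = (1-\<alpha>) * (1-\<beta>)"
  have \<alpha>: "0 \<le> \<alpha>" "\<alpha> \<le> 1 / (4 * real d)" and \<beta>: "0 \<le> \<beta>" "\<beta> \<le> 1 / (4 * real d)"
    using KR pos d0 unfolding \<alpha>_def \<beta>_def by (simp_all add: field_simps)
  moreover have "1 / (4 * real d) \<le> 1" using d by simp
  ultimately have \<alpha>1: "\<alpha> \<le> 1" and \<rho>: "0 \<le> \<rho>" "\<rho> \<le> 1" unfolding \<rho>_def by (auto intro: mult_le_one)
  have "1 - \<rho> \<le> \<alpha> + \<beta>" unfolding \<rho>_def using \<alpha> \<beta> by (simp add: algebra_simps)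
  also have "\<dots> \<le> 1 / (2 * real d)" using \<alpha> \<beta> by simp
  finally have d\<rho>: "real d * (1 - \<rho>) \<le> 1/2" using d0 by (simp add: field_simps)
  have "d + 1 \<le> 4*d*(d+1)" using d by (simp add: algebra_simps)
  hence run: "k + d \<le> m" using R k by linarith
  define f where "f = (\<lambda>t. binom_term m x (k+t))"
  have "f 0 \<le> 2 / real d"
  proof (rule geometric_run_bound[OF _ \<rho> d d\<rho>])
    show "0 \<le> f t" for t unfolding f_def using x by (intro binom_term_nonneg) auto
  next
    fix t assume t: "Suc t < d"
    have jm: "k + t < m" using t run by linarith
    have "(1-\<alpha>) * real (m-k+1) = real (m-k+1) - (real d + 1)"
      unfolding \<alpha>_def using pos by (simp add: field_simps)
    moreover have "real (m - (k+t)) = real (m-k+1) - 1 - real t" using jm by (simp add: of_nat_diff)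
    ultimately have c1: "(1-\<alpha>) * real (m-k+1) \<le> real (m - (k+t))" using t by simp
    have "(real d + 1) * 1 \<le> (real d + 1) * ((real k + real t + 1) / real k)"
      using pos by (intro mult_left_mono) auto
    moreover have "(1-\<beta>) * (real k + real t + 1)
        = real k + real t + 1 - (real d + 1) * ((real k + real t + 1) / real k)"
      unfolding \<beta>_def using pos by (simp add: field_simps)
    ultimately have c2: "(1-\<beta>) * (real k + real t + 1) \<le> real k" using t by simp
    have "\<rho> * (real (Suc (k+t)) * (1-x)) = (1-\<alpha>) * ((1-\<beta>) * (real k + real t + 1)) * (1-x)"
      unfolding \<rho>_def by (simp add: algebra_simps)
    also have "\<dots> \<le> (1-\<alpha>) * (real k * (1-x))"
      using c2 \<alpha>1 x by (auto intro!: mult_left_mono mult_right_mono simp: mult.assoc)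
    also have "\<dots> \<le> (1-\<alpha>) * (real (m-k+1) * x)"
      using slope \<alpha>1 by (intro mult_left_mono) auto
    also have "\<dots> \<le> real (m - (k+t)) * x"
      using c1 x by (simp add: mult.assoc[symmetric] mult_right_mono)
    finally show "\<rho> * f t \<le> f (Suc t)"
      unfolding f_def using binom_term_Suc_ge[OF jm x] by simp
  next
    have "(\<Sum>t<d. f t) = (\<Sum>j\<in>(\<lambda>t. k+t) ` {..<d}. binom_term m x j)"
      unfolding f_def by (subst sum.reindex) auto
    also have "\<dots> \<le> 1" by (rule sum_binom_term_le_1) (use x run in auto)
    finally show "(\<Sum>t<d. f t) \<le> 1" .
  qed
  thus ?thesis unfolding f_def by simp
qed

lemma binom_term_le:
  assumes d: "1 \<le> d" and x: "0 < x" "x < 1" and k: "k \<le> m"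
    and K: "4*d*(d+1) \<le> k" and R: "4*d*(d+1) \<le> m - k"
  shows "binom_term m x k \<le> 2 / real d"
proof (cases "real k * (1-x) \<le> real (m-k+1) * x")
  case True
  thus ?thesis using assms by (intro binom_term_le_ascending) auto
next
  case False
  \<comment> \<open>then the run ascends from \<open>m-k\<close> under the symmetry \<open>k \<mapsto> m-k\<close>, \<open>x \<mapsto> 1-x\<close>\<close>
  have "real (m-k) * x \<le> real (m-k+1) * x" using x by (intro mult_right_mono) auto
  also have "\<dots> < real k * (1-x)" using False by simp
  also have "\<dots> \<le> real (k+1) * (1-x)" using x by (intro mult_right_mono) auto
  finally have "real (m-k) * (1 - (1-x)) \<le> real (m-(m-k)+1) * (1-x)" using k by simp
  hence "binom_term m (1-x) (m-k) \<le> 2 / real d"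
    using assms by (intro binom_term_le_ascending) auto
  thus ?thesis using binom_term_symmetric[OF k] by simp
qed

lemma one_minus_mult_binom_term_le:
  assumes "k \<le> m" "0 \<le> x" "x \<le> 1"
  shows "(1-x) * binom_term m x k \<le> real (Suc m - k) / real (Suc m)"
proof -
  have "(Suc m - k) * (Suc m choose k) = Suc m * (m choose k)"
    using binomial_absorb_comp[of "Suc m" k] by simp
  hence c: "real (Suc m - k) * real (Suc m choose k) = real (Suc m) * real (m choose k)"
    by (metis of_nat_mult)
  have e: "(1-x)^(Suc m - k) = (1-x) * (1-x)^(m-k)" using assms(1) by (simp add: Suc_diff_le)
  have "(1-x) * binom_term m x k = real (m choose k) * x^k * (1-x)^(Suc m - k)"
    unfolding e binom_term_def by simp
  also have "\<dots> = (real (Suc m - k) * real (Suc m choose k)) / real (Suc m) * x^k * (1-x)^(Suc m - k)"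
    unfolding c by simp
  also have "\<dots> = real (Suc m - k) / real (Suc m) * binom_term (Suc m) x k"
    unfolding binom_term_def by simp
  also have "\<dots> \<le> real (Suc m - k) / real (Suc m)"
    using assms by (intro mult_left_le binom_term_le_1) auto
  finally show ?thesis .
qed

lemma binom_term_le_small_index:
  assumes "k \<le> D" "D \<le> m" "1 \<le> m" "0 \<le> c" "c \<le> x" "x \<le> 1"
  shows "binom_term m x k \<le> real m ^ D * (1-c)^(m-D)"
proof -
  have "real (m choose k) \<le> real m ^ k"
    using binomial_le_pow[of k m] assms by (metis of_nat_le_iff of_nat_power le_trans)
  also have "\<dots> \<le> real m ^ D" using assms by (intro power_increasing) auto
  finally have "real (m choose k) \<le> real m ^ D" .
  moreover have "x^k \<le> 1" using assms by (simp add: power_le_one)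
  moreover have "(1-x)^(m-k) \<le> (1-c)^(m-k)" using assms by (intro power_mono) auto
  moreover have "(1-c)^(m-k) \<le> (1-c)^(m-D)" using assms by (intro power_decreasing) auto
  ultimately have "binom_term m x k \<le> real m ^ D * 1 * (1-c)^(m-D)"
    unfolding binom_term_def using assms by (intro mult_mono) auto
  thus ?thesis by simp
qed

text \<open>The factor \<open>1-x\<close> is needed near \<open>x = 1\<close>, where the top term \<open>x^m\<close> is close to 1.\<close>

lemma binom_term_uniformly_small:
  assumes c: "0 < c" "c < 1" and e: "0 < \<epsilon>"
  shows "\<forall>\<^sub>F m in sequentially. \<forall>x k. c \<le> x \<longrightarrow> x \<le> 1 \<longrightarrow> k \<le> m \<longrightarrow> (1-x) * binom_term m x k \<le> \<epsilon>"
proof -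
  define d where "d = nat \<lceil>2/\<epsilon>\<rceil> + 1"
  have d: "2/\<epsilon> \<le> real d" "1 \<le> d" unfolding d_def by linarith+
  have d\<epsilon>: "2 / real d \<le> \<epsilon>" using d e by (simp add: field_simps)
  define D where "D = 4*d*(d+1)"
  have "(\<lambda>m. real m ^ D * (1-c)^m) \<longlonglongrightarrow> 0" using c by real_asymp
  hence ev1: "\<forall>\<^sub>F m in sequentially. real m ^ D * (1-c)^m < \<epsilon> * (1-c)^D"
    using e c by (intro order_tendstoD(2)) auto
  have "(\<lambda>m. real D / real (Suc m)) \<longlonglongrightarrow> 0" by real_asymp
  hence ev2: "\<forall>\<^sub>F m in sequentially. real D / real (Suc m) < \<epsilon>"
    using e by (intro order_tendstoD(2)) auto
  have ev3: "\<forall>\<^sub>F m in sequentially. D + 1 \<le> m" by (rule eventually_ge_at_top)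
  show ?thesis
    using ev1 ev2 ev3
  proof eventually_elim
    case (elim m)
    show ?case
    proof (intro allI impI)
      fix x k assume x: "c \<le> x" "x \<le> 1" and k: "k \<le> m"
      show "(1-x) * binom_term m x k \<le> \<epsilon>"
      proof (cases "m - k < D")
        case True
        have "(1-x) * binom_term m x k \<le> real (Suc m - k) / real (Suc m)"
          using k x c by (intro one_minus_mult_binom_term_le) auto
        also have "\<dots> \<le> real D / real (Suc m)" using True by (intro divide_right_mono) auto
        finally show ?thesis using elim by simp
      next
        case False
        have "binom_term m x k \<le> \<epsilon>" if "x < 1"
        proof (cases "k < D")
          case True
          have "binom_term m x k \<le> real m ^ D * (1-c)^(m-D)"
            using True elim x c by (intro binom_term_le_small_index) auto
          also have "\<dots> = real m ^ D * (1-c)^m / (1-c)^D" using elim c by (simp add: power_diff)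
          also have "\<dots> \<le> \<epsilon>" using elim c by (simp add: field_simps)
          finally show ?thesis .
        next
          case False
          hence "binom_term m x k \<le> 2 / real d"
            using \<open>\<not> m - k < D\<close> k x c that d(2) unfolding D_def by (intro binom_term_le) auto
          thus ?thesis using d\<epsilon> by linarith
        qed
        moreover have "(1-x) * binom_term m x k \<le> binom_term m x k"
          using x c binom_term_nonneg[of x m k] by (intro mult_left_le_one_le) auto
        ultimately show ?thesis using x e by (cases "x = 1") auto
      qed
    qed
  qed
qed

section \<open>Concentration at the majority threshold\<close>

lemma exp_neg_linear_tendsto_0: "0 < c \<Longrightarrow> (\<lambda>n. exp (- c * real n)) \<longlonglongrightarrow> 0"
  using LIMSEQ_power_zero[of "exp (- c)"] by (simp add: exp_of_nat_mult[symmetric] mult.commute)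

lemma binom_tail_majority_tendsto_1:
  assumes p: "1/2 < p" "p \<le> 1"
  shows "(\<lambda>n. binom_tail n p (n div 2 + 1)) \<longlonglongrightarrow> 1"
proof -
  define \<delta> where "\<delta> = p - 1/2"
  have \<delta>: "0 < \<delta>" unfolding \<delta>_def using p by simp
  have bound: "1 - exp (-2 * real n * \<delta>\<^sup>2) \<le> binom_tail n p (n div 2 + 1)" if n: "0 < n" for n
  proof -
    interpret binomial_distribution n p by unfold_locales (use p in auto)
    have "1 - binom_tail n p (n div 2 + 1) = measure_pmf.prob (binomial_pmf n p) (UNIV - {n div 2 + 1..})"
      using p measure_pmf.prob_compl[of "{n div 2 + 1..}" "binomial_pmf n p"] by (simp add: binom_tail_eq_prob)
    also have "\<dots> \<le> measure_pmf.prob (binomial_pmf n p) {x. real x / real n \<le> p - \<delta>}"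
    proof (rule measure_pmf.finite_measure_mono)
      show "UNIV - {n div 2 + 1..} \<subseteq> {x. real x / real n \<le> p - \<delta>}"
      proof
        fix j assume "j \<in> UNIV - {n div 2 + 1..}"
        hence "2 * j \<le> n" by auto
        hence "2 * real j \<le> real n" by (metis of_nat_le_iff of_nat_mult of_nat_numeral)
        thus "j \<in> {x. real x / real n \<le> p - \<delta>}" using n unfolding \<delta>_def by (simp add: field_simps)
      qed
    qed simp
    also have "\<dots> \<le> exp (-2 * real n * \<delta>\<^sup>2)" using prob_le'[OF n less_imp_le[OF \<delta>]] by simp
    finally show ?thesis by simp
  qed
  have "(\<lambda>n. 1 - exp (-2 * real n * \<delta>\<^sup>2)) \<longlonglongrightarrow> 1"
    using tendsto_diff[OF tendsto_const exp_neg_linear_tendsto_0[of "2 * \<delta>\<^sup>2"], of 1] \<delta>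
    by (simp add: mult_ac)
  thus ?thesis
  proof (rule tendsto_sandwich[rotated 2, OF _ tendsto_const])
    show "\<forall>\<^sub>F n in sequentially. 1 - exp (-2 * real n * \<delta>\<^sup>2) \<le> binom_tail n p (n div 2 + 1)"
      unfolding eventually_sequentially using bound by (intro exI[of _ 1]) simp
    show "\<forall>\<^sub>F n in sequentially. binom_tail n p (n div 2 + 1) \<le> 1"
      using p by (intro always_eventually allI binom_tail_le_1) auto
  qed
qed

lemma binom_tail_majority_tendsto_0:
  assumes p: "1/2 < p" "p \<le> 1"
  shows "(\<lambda>n. binom_tail (n-1) (1-p) (n div 2)) \<longlonglongrightarrow> 0"
proof -
  define \<delta> where "\<delta> = p - 1/2"
  have \<delta>: "0 < \<delta>" unfolding \<delta>_def using p by simp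
  have bound: "binom_tail (n-1) (1-p) (n div 2) \<le> exp (-2 * real n * \<delta>\<^sup>2) * exp (2 * \<delta>\<^sup>2)"
    if n: "2 \<le> n" for n
  proof -
    have m: "0 < n - 1" using n by simp
    interpret binomial_distribution "n-1" "1-p" by unfold_locales (use p in auto)
    have "binom_tail (n-1) (1-p) (n div 2) = measure_pmf.prob (binomial_pmf (n-1) (1-p)) {n div 2..}"
      using p by (simp add: binom_tail_eq_prob)
    also have "\<dots> \<le> measure_pmf.prob (binomial_pmf (n-1) (1-p)) {x. (1-p) + \<delta> \<le> real x / real (n-1)}"
    proof (rule measure_pmf.finite_measure_mono)
      show "{n div 2..} \<subseteq> {x. (1-p) + \<delta> \<le> real x / real (n-1)}"
      proof
        fix j assume "j \<in> {n div 2..}"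
        hence "n - 1 \<le> 2 * j" by auto
        hence "real (n-1) \<le> 2 * real j" by (metis of_nat_le_iff of_nat_mult of_nat_numeral)
        thus "j \<in> {x. (1-p) + \<delta> \<le> real x / real (n-1)}" using m unfolding \<delta>_def by (simp add: field_simps)
      qed
    qed simp
    also have "\<dots> \<le> exp (-2 * real (n-1) * \<delta>\<^sup>2)" using prob_ge'[OF m less_imp_le[OF \<delta>]] by simp
    also have "\<dots> = exp (-2 * real n * \<delta>\<^sup>2) * exp (2 * \<delta>\<^sup>2)"
      using n by (simp add: exp_add[symmetric] of_nat_diff algebra_simps)
    finally show ?thesis .
  qed
  have "(\<lambda>n. exp (-2 * real n * \<delta>\<^sup>2) * exp (2 * \<delta>\<^sup>2)) \<longlonglongrightarrow> 0"
    using tendsto_mult_right_zero[OF exp_neg_linear_tendsto_0[of "2 * \<delta>\<^sup>2"]] \<delta> by (simp add: mult_ac)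
  thus ?thesis
  proof (rule tendsto_sandwich[OF _ _ tendsto_const, rotated 2])
    show "\<forall>\<^sub>F n in sequentially. 0 \<le> binom_tail (n-1) (1-p) (n div 2)"
      using p by (intro always_eventually allI binom_tail_nonneg) auto
    show "\<forall>\<^sub>F n in sequentially. binom_tail (n-1) (1-p) (n div 2) \<le> exp (-2 * real n * \<delta>\<^sup>2) * exp (2 * \<delta>\<^sup>2)"
      unfolding eventually_sequentially using bound by (intro exI[of _ 2]) simp
  qed
qed

section \<open>The game in terms of binomial tails\<close>

lemma convex_comb_in_unit_interval:
  fixes q y1 y2 :: real
  assumes "0 \<le> q" "q \<le> 1" "0 \<le> y1" "y1 \<le> 1" "0 \<le> y2" "y2 \<le> 1"
  shows "0 \<le> q * y1 + (1-q) * y2 \<and> q * y1 + (1-q) * y2 \<le> 1"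
proof -
  have "q * y1 \<le> q" "(1-q) * y2 \<le> 1-q" using assms by (auto intro: mult_left_le)
  moreover have "0 \<le> q * y1" "0 \<le> (1-q) * y2" using assms by auto
  ultimately show ?thesis by linarith
qed

definition contrib_prob :: "real \<Rightarrow> bool \<Rightarrow> (bool \<Rightarrow> real) \<Rightarrow> real" where
  "contrib_prob p \<omega> f = (let q = if \<omega> then p else 1-p in q * f True + (1-q) * f False)"

lemma contrib_prob_True: "contrib_prob p True f = p * f True + (1-p) * f False"
  and contrib_prob_False: "contrib_prob p False f = (1-p) * f True + p * f False"
  unfolding contrib_prob_def by simp_all

lemma contrib_prob_bounds:
  assumes "0 \<le> p" "p \<le> 1" "is_strategy f"
  shows "0 \<le> contrib_prob p \<omega> f" "contrib_prob p \<omega> f \<le> 1"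
  using assms convex_comb_in_unit_interval[of "if \<omega> then p else 1-p" "f True" "f False"]
  unfolding contrib_prob_def is_strategy_def by (auto simp: Let_def)

lemma bind_bernoulli_strategy:
  assumes "0 \<le> q" "q \<le> 1" "is_strategy f"
  shows "bind_pmf (bernoulli_pmf q) (\<lambda>s. bernoulli_pmf (f s)) = bernoulli_pmf (q * f True + (1-q) * f False)"
proof (rule pmf_eqI)
  fix b :: bool
  have f: "0 \<le> f s" "f s \<le> 1" for s using assms(3) unfolding is_strategy_def by auto
  hence "0 \<le> q * f True + (1-q) * f False" "q * f True + (1-q) * f False \<le> 1"
    using convex_comb_in_unit_interval[OF assms(1,2)] by blast+
  thus "pmf (bind_pmf (bernoulli_pmf q) (\<lambda>s. bernoulli_pmf (f s))) b
      = pmf (bernoulli_pmf (q * f True + (1-q) * f False)) b"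
    unfolding pmf_bind using assms f by (cases b) (auto simp: algebra_simps)
qed

lemma map_game_pmf:
  assumes p: "0 \<le> p" "p \<le> 1" and st: "\<forall>j<n. is_strategy (\<sigma> j)"
  shows "map_pmf (\<lambda>(\<omega>,s,a). (\<omega>,a)) (game_pmf p n \<sigma>) =
     bind_pmf (bernoulli_pmf (1/2)) (\<lambda>\<omega>. map_pmf (Pair \<omega>)
        (Pi_pmf {..<n} False (\<lambda>j. bernoulli_pmf (contrib_prob p \<omega> (\<sigma> j)))))"
  unfolding game_pmf_def map_bind_pmf
proof (rule bind_pmf_cong[OF refl], goal_cases)
  case (1 \<omega>)
  let ?S = "Pi_pmf {..<n} False (\<lambda>i. bernoulli_pmf (if \<omega> then p else 1 - p))"
  let ?A = "\<lambda>s. Pi_pmf {..<n} False (\<lambda>i. bernoulli_pmf (\<sigma> i (s i)))"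
  have "map_pmf (\<lambda>(\<omega>, s, a). (\<omega>, a)) (?S \<bind> (\<lambda>s. ?A s \<bind> (\<lambda>a. return_pmf (\<omega>, s, a))))
      = map_pmf (Pair \<omega>) (?S \<bind> ?A)"
    by (simp add: map_bind_pmf map_pmf_def[symmetric] pmf.map_comp o_def)
  also have "?S \<bind> ?A = Pi_pmf {..<n} False (\<lambda>i. bind_pmf (bernoulli_pmf (if \<omega> then p else 1 - p))
      (\<lambda>x. bernoulli_pmf (\<sigma> i x)))"
    by (rule Pi_pmf_bind[symmetric]) simp
  also have "\<dots> = Pi_pmf {..<n} False (\<lambda>j. bernoulli_pmf (contrib_prob p \<omega> (\<sigma> j)))"
    by (rule Pi_pmf_cong) (use st p in \<open>auto simp: bind_bernoulli_strategy contrib_prob_def\<close>)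
  finally show ?case by (simp add: map_bind_pmf)
qed

lemma prob_game_pmf:
  assumes p: "0 \<le> p" "p \<le> 1" and st: "\<forall>j<n. is_strategy (\<sigma> j)"
  shows "measure_pmf.prob (game_pmf p n \<sigma>) {(\<omega>, s, a). Q \<omega> a} =
    1/2 * measure_pmf.prob (Pi_pmf {..<n} False (\<lambda>j. bernoulli_pmf (contrib_prob p True (\<sigma> j)))) {a. Q True a}
  + 1/2 * measure_pmf.prob (Pi_pmf {..<n} False (\<lambda>j. bernoulli_pmf (contrib_prob p False (\<sigma> j)))) {a. Q False a}"
proof -
  let ?A = "\<lambda>\<omega>. Pi_pmf {..<n} False (\<lambda>j. bernoulli_pmf (contrib_prob p \<omega> (\<sigma> j)))"
  have fin: "finite (set_pmf (?A \<omega>))" for \<omega>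
    by (rule finite_subset[OF set_Pi_pmf_subset']) (auto intro!: finite_PiE_dflt)
  have "measure_pmf.prob (game_pmf p n \<sigma>) {(\<omega>, s, a). Q \<omega> a}
      = measure_pmf.prob (map_pmf (\<lambda>(\<omega>,s,a). (\<omega>,a)) (game_pmf p n \<sigma>)) {(\<omega>, a). Q \<omega> a}"
  proof -
    have pre: "(\<lambda>(\<omega>,s,a). (\<omega>,a)) -` {(\<omega>, a). Q \<omega> a} = {(\<omega>, s, a). Q \<omega> a}" by auto
    show ?thesis by (simp only: measure_map_pmf pre)
  qed
  also have "\<dots> = measure_pmf.expectation (bind_pmf (bernoulli_pmf (1/2)) (\<lambda>\<omega>. map_pmf (Pair \<omega>) (?A \<omega>)))
      (indicator {(\<omega>, a). Q \<omega> a})"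
    unfolding map_game_pmf[OF p st] by simp
  also have "\<dots> = (\<Sum>\<omega>\<in>UNIV. pmf (bernoulli_pmf (1/2)) \<omega> *\<^sub>R
      measure_pmf.expectation (map_pmf (Pair \<omega>) (?A \<omega>)) (indicator {(\<omega>, a). Q \<omega> a}))"
    by (rule pmf_expectation_bind) (auto intro: fin)
  also have "\<dots> = 1/2 * measure_pmf.prob (?A True) {a. Q True a} + 1/2 * measure_pmf.prob (?A False) {a. Q False a}"
    by (simp add: UNIV_bool vimage_def)
  finally show ?thesis .
qed

lemma prob_Pi_pmf_count:
  assumes "0 \<le> c" "c \<le> 1"
  shows "measure_pmf.prob (Pi_pmf {..<n} False (\<lambda>_. bernoulli_pmf c)) {a. num_contrib n a \<in> K}
       = measure_pmf.prob (binomial_pmf n c) K"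
proof -
  have "binomial_pmf n c = map_pmf (\<lambda>a. card {j\<in>{..<n}. a j}) (Pi_pmf {..<n} False (\<lambda>_. bernoulli_pmf c))"
    by (rule binomial_pmf_altdef') (use assms in auto)
  moreover have "num_contrib n a = card {j\<in>{..<n}. a j}" for a
    unfolding num_contrib_def by (rule arg_cong[where f=card]) auto
  ultimately show ?thesis by (simp add: vimage_def)
qed

lemma prob_Pi_pmf_contrib_funded:
  assumes i: "i < n" and B: "1 \<le> B" and c: "0 \<le> c" "c \<le> 1" "0 \<le> c'" "c' \<le> 1"
  shows "measure_pmf.prob (Pi_pmf {..<n} False ((\<lambda>_. bernoulli_pmf c)(i := bernoulli_pmf c')))
           {a. a i \<and> B \<le> num_contrib n a} = c' * binom_tail (n-1) c (B-1)"
proof -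
  define S where "S = {..<n} - {i}"
  have S: "{..<n} = insert i S" "i \<notin> S" "finite S" "card S = n - 1" using i unfolding S_def by auto
  define cnt where "cnt = (\<lambda>a::nat \<Rightarrow> bool. card {j\<in>S. a j})"
  let ?M = "pair_pmf (bernoulli_pmf c') (Pi_pmf S False (\<lambda>_. bernoulli_pmf c))"
  have "Pi_pmf S False ((\<lambda>_. bernoulli_pmf c)(i := bernoulli_pmf c')) = Pi_pmf S False (\<lambda>_. bernoulli_pmf c)"
    by (rule Pi_pmf_cong) (use S in auto)
  hence Pi: "Pi_pmf {..<n} False ((\<lambda>_. bernoulli_pmf c)(i := bernoulli_pmf c')) = map_pmf (\<lambda>(y,a). a(i:=y)) ?M"
    unfolding S(1) using S by (subst Pi_pmf_insert) auto
  have "num_contrib n (a(i:=True)) = Suc (cnt a)" for a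
  proof -
    have "{j. j < n \<and> (a(i:=True)) j} = insert i {j\<in>S. a j}" using S by auto
    thus ?thesis unfolding num_contrib_def cnt_def using S by simp
  qed
  hence event: "(\<lambda>(y,a). a(i:=y)) -` {a. a i \<and> B \<le> num_contrib n a} = (\<lambda>(y,a). (y, cnt a)) -` ({True} \<times> {B-1..})"
    using B by auto
  have "map_pmf (\<lambda>(y,a). (y, cnt a)) ?M = pair_pmf (bernoulli_pmf c') (binomial_pmf (n-1) c)"
    using map_pair[of id cnt] binomial_pmf_altdef'[OF S(3,4), of c False] c unfolding cnt_def by simp
  hence "measure_pmf.prob ?M ((\<lambda>(y,a). (y, cnt a)) -` ({True} \<times> {B-1..}))
      = measure_pmf.prob (pair_pmf (bernoulli_pmf c') (binomial_pmf (n-1) c)) ({True} \<times> {B-1..})"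
    by (metis measure_map_pmf)
  also have "\<dots> = measure_pmf.prob (bernoulli_pmf c') {True} * measure_pmf.prob (binomial_pmf (n-1) c) {B-1..}"
    by (rule measure_pmf_prob_product) (auto intro: countable_subset[OF subset_UNIV])
  finally have "measure_pmf.prob ?M ((\<lambda>(y,a). (y, cnt a)) -` ({True} \<times> {B-1..}))
      = measure_pmf.prob (bernoulli_pmf c') {True} * measure_pmf.prob (binomial_pmf (n-1) c) {B-1..}" .
  thus ?thesis
    unfolding Pi measure_map_pmf event using c by (simp add: binom_tail_eq_prob measure_pmf_single)
qed

lemma exp_payoff_deviation:
  assumes p: "0 \<le> p" "p \<le> 1" and f: "is_strategy f" and \<tau>: "is_strategy \<tau>" and i: "i < n" and B: "1 \<le> B"
  shows "exp_payoff p B n ((\<lambda>_. f)(i:=\<tau>)) i =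
     1/2 * (contrib_prob p True \<tau> * binom_tail (n-1) (contrib_prob p True f) (B-1))
   - 1/2 * (contrib_prob p False \<tau> * binom_tail (n-1) (contrib_prob p False f) (B-1))"
proof -
  let ?\<sigma> = "(\<lambda>_. f)(i:=\<tau>)"
  have st: "\<forall>j<n. is_strategy (?\<sigma> j)" using f \<tau> by simp
  have Pi: "(\<lambda>j. bernoulli_pmf (contrib_prob p \<omega> (?\<sigma> j)))
      = (\<lambda>_. bernoulli_pmf (contrib_prob p \<omega> f))(i := bernoulli_pmf (contrib_prob p \<omega> \<tau>))" for \<omega>
    by auto
  have "measure_pmf.prob (game_pmf p n ?\<sigma>) {(\<omega>, s, a). \<omega> = v \<and> a i \<and> B \<le> num_contrib n a}
      = 1/2 * measure_pmf.prob (Pi_pmf {..<n} False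
          ((\<lambda>_. bernoulli_pmf (contrib_prob p v f))(i := bernoulli_pmf (contrib_prob p v \<tau>))))
          {a. a i \<and> B \<le> num_contrib n a}" for v
    using prob_game_pmf[OF p st, of "\<lambda>\<omega> a. \<omega> = v \<and> a i \<and> B \<le> num_contrib n a"]
    unfolding Pi by (cases v) (simp_all add: fun_upd_def)
  also have "\<dots> v = 1/2 * (contrib_prob p v \<tau> * binom_tail (n-1) (contrib_prob p v f) (B-1))" for v
    using prob_Pi_pmf_contrib_funded[OF i B contrib_prob_bounds[OF p f] contrib_prob_bounds[OF p \<tau>]] by simp
  finally have win: "measure_pmf.prob (game_pmf p n ?\<sigma>) {(\<omega>, s, a). \<omega> = v \<and> a i \<and> B \<le> num_contrib n a}
      = 1/2 * (contrib_prob p v \<tau> * binom_tail (n-1) (contrib_prob p v f) (B-1))" for v .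
  have "payoff B n i = (\<lambda>x. indicator {(\<omega>, s, a). \<omega> = True \<and> a i \<and> B \<le> num_contrib n a} x
      - indicator {(\<omega>, s, a). \<omega> = False \<and> a i \<and> B \<le> num_contrib n a} x)"
    unfolding payoff_def by (auto simp: fun_eq_iff indicator_def)
  thus ?thesis
    unfolding exp_payoff_def using win[of True] win[of False]
    by (simp add: measure_pmf.emeasure_eq_measure)
qed

lemma prob_game_pmf_sym:
  assumes p: "0 \<le> p" "p \<le> 1" and f: "is_strategy f"
  shows "measure_pmf.prob (game_pmf p n (\<lambda>_. f))
      {(\<omega>, s, a). \<omega> \<and> num_contrib n a \<in> KH \<or> \<not> \<omega> \<and> num_contrib n a \<in> KL} =
    1/2 * measure_pmf.prob (binomial_pmf n (contrib_prob p True f)) KH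
  + 1/2 * measure_pmf.prob (binomial_pmf n (contrib_prob p False f)) KL"
  using prob_game_pmf[OF p, of n "\<lambda>_. f" "\<lambda>\<omega> a. \<omega> \<and> num_contrib n a \<in> KH \<or> \<not> \<omega> \<and> num_contrib n a \<in> KL"] f
    prob_Pi_pmf_count[OF contrib_prob_bounds[OF p f]] by simp

lemma nontrivial_sym_iff:
  assumes p: "0 \<le> p" "p \<le> 1" and f: "is_strategy f"
  shows "nontrivial p B n (\<lambda>_. f) \<longleftrightarrow>
    0 < binom_tail n (contrib_prob p True f) B + binom_tail n (contrib_prob p False f) B"
proof -
  have "measure_pmf.prob (game_pmf p n (\<lambda>_. f)) {(\<omega>, s, a). B \<le> num_contrib n a}
      = measure_pmf.prob (game_pmf p n (\<lambda>_. f))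
          {(\<omega>, s, a). \<omega> \<and> num_contrib n a \<in> {B..} \<or> \<not> \<omega> \<and> num_contrib n a \<in> {B..}}"
    by (rule arg_cong[where f = "measure_pmf.prob _"]) auto
  also have "\<dots> = 1/2 * binom_tail n (contrib_prob p True f) B + 1/2 * binom_tail n (contrib_prob p False f) B"
    unfolding prob_game_pmf_sym[OF p f] binom_tail_eq_prob[OF contrib_prob_bounds[OF p f]] ..
  finally show ?thesis unfolding nontrivial_def by auto
qed

lemma theta_eq_binom_tail:
  assumes p: "0 \<le> p" "p \<le> 1" and f: "is_strategy (sym_eq p B n)"
  shows "theta p B n = 1/2 * binom_tail n (contrib_prob p True (sym_eq p B n)) B
                     + 1/2 * (1 - binom_tail n (contrib_prob p False (sym_eq p B n)) B)"
proof -
  let ?M = "game_pmf p n (\<lambda>_. sym_eq p B n)"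
  let ?P = "\<lambda>\<omega>. measure_pmf.prob (binomial_pmf n (contrib_prob p \<omega> (sym_eq p B n)))"
  have prob: "measure_pmf.prob ?M E
      = 1/2 * ?P True KH + 1/2 * ?P False KL"
    if "E = {(\<omega>, s, a). \<omega> \<and> num_contrib n a \<in> KH \<or> \<not> \<omega> \<and> num_contrib n a \<in> KL}" for E KH KL
    unfolding that by (rule prob_game_pmf_sym[OF p f])
  have tail: "?P \<omega> {B..} = binom_tail n (contrib_prob p \<omega> (sym_eq p B n)) B" for \<omega>
    using binom_tail_eq_prob[OF contrib_prob_bounds[OF p f]] by simp
  have compl: "?P False (UNIV - {B..}) = 1 - ?P False {B..}"
    using measure_pmf.prob_compl[of "{B..}" "binomial_pmf n (contrib_prob p False (sym_eq p B n))"] by simp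
  have events: "measure_pmf.prob ?M {(\<omega>, s, a). \<omega> \<and> B \<le> num_contrib n a} = 1/2 * ?P True {B..} + 1/2 * ?P False {}"
    "measure_pmf.prob ?M {(\<omega>, s, a). \<not> \<omega> \<and> num_contrib n a < B} = 1/2 * ?P True {} + 1/2 * ?P False (UNIV - {B..})"
    "measure_pmf.prob ?M {(\<omega>, s, a). \<omega>} = 1/2 * ?P True UNIV + 1/2 * ?P False {}"
    "measure_pmf.prob ?M {(\<omega>, s, a). \<not> \<omega>} = 1/2 * ?P True {} + 1/2 * ?P False UNIV"
    by (rule prob; auto)+
  show ?thesis unfolding theta_def Let_def events compl tail by simp
qed

section \<open>Best responses and the symmetric equilibrium\<close>

text \<open>Twice the expected gain from contributing after a high (low) signal, when the other \<open>m\<close>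
  players contribute with probabilities \<open>h\<close> and \<open>l\<close> after a high and a low signal and \<open>k\<close> of them
  are needed to reach the threshold.\<close>

definition gain_high :: "real \<Rightarrow> nat \<Rightarrow> nat \<Rightarrow> real \<Rightarrow> real \<Rightarrow> real" where
  "gain_high p m k h l = p * binom_tail m (p*h + (1-p)*l) k - (1-p) * binom_tail m ((1-p)*h + p*l) k"

definition gain_low :: "real \<Rightarrow> nat \<Rightarrow> nat \<Rightarrow> real \<Rightarrow> real \<Rightarrow> real" where
  "gain_low p m k h l = (1-p) * binom_tail m (p*h + (1-p)*l) k - p * binom_tail m ((1-p)*h + p*l) k"

lemma exp_payoff_deviation_gains:
  assumes "0 \<le> p" "p \<le> 1" "is_strategy f" "is_strategy \<tau>" "i < n" "1 \<le> B"
  shows "exp_payoff p B n ((\<lambda>_. f)(i:=\<tau>)) i = 1/2 * (\<tau> True * gain_high p (n-1) (B-1) (f True) (f False)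
           + \<tau> False * gain_low p (n-1) (B-1) (f True) (f False))"
  unfolding exp_payoff_deviation[OF assms] gain_high_def gain_low_def contrib_prob_True contrib_prob_False
  by (simp add: algebra_simps)

lemma linear_max_unit_interval_iff:
  fixes G x :: real
  assumes "0 \<le> x" "x \<le> 1"
  shows "(\<forall>t. 0 \<le> t \<longrightarrow> t \<le> 1 \<longrightarrow> t * G \<le> x * G) \<longleftrightarrow> (0 < G \<longrightarrow> x = 1) \<and> (G < 0 \<longrightarrow> x = 0)"
proof
  assume max: "\<forall>t. 0 \<le> t \<longrightarrow> t \<le> 1 \<longrightarrow> t * G \<le> x * G"
  show "(0 < G \<longrightarrow> x = 1) \<and> (G < 0 \<longrightarrow> x = 0)"
    using max[rule_format, of 0] max[rule_format, of 1] assms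
    by (auto simp: mult_le_cancel_right zero_le_mult_iff)
next
  assume "(0 < G \<longrightarrow> x = 1) \<and> (G < 0 \<longrightarrow> x = 0)"
  thus "\<forall>t. 0 \<le> t \<longrightarrow> t \<le> 1 \<longrightarrow> t * G \<le> x * G"
    by (cases G "0::real" rule: linorder_cases) (auto simp: mult_le_cancel_right mult_le_0_iff)
qed

lemma is_BNE_sym_iff:
  assumes p: "0 \<le> p" "p \<le> 1" and f: "is_strategy f" and B: "1 \<le> B" "B \<le> n"
  defines "GH \<equiv> gain_high p (n-1) (B-1) (f True) (f False)"
      and "GL \<equiv> gain_low p (n-1) (B-1) (f True) (f False)"
  shows "is_BNE p B n (\<lambda>_. f) \<longleftrightarrow>
    (0 < GH \<longrightarrow> f True = 1) \<and> (GH < 0 \<longrightarrow> f True = 0) \<and> (0 < GL \<longrightarrow> f False = 1) \<and> (GL < 0 \<longrightarrow> f False = 0)"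
proof -
  have f01: "0 \<le> f s" "f s \<le> 1" for s using f unfolding is_strategy_def by auto
  have payoff: "exp_payoff p B n ((\<lambda>_. f)(i:=\<tau>)) i \<le> exp_payoff p B n (\<lambda>_. f) i
      \<longleftrightarrow> \<tau> True * GH + \<tau> False * GL \<le> f True * GH + f False * GL"
    if "i < n" "is_strategy \<tau>" for i \<tau>
  proof -
    have "(\<lambda>_::nat. f)(i := f) = (\<lambda>_. f)" by auto
    hence "exp_payoff p B n (\<lambda>_. f) i = 1/2 * (f True * GH + f False * GL)"
      using exp_payoff_deviation_gains[OF p f f that(1) B(1)] unfolding GH_def GL_def by simp
    thus ?thesis
      unfolding exp_payoff_deviation_gains[OF p f that(2) that(1) B(1)] GH_def[symmetric] GL_def[symmetric]
      by simp
  qed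
  have "is_BNE p B n (\<lambda>_. f) \<longleftrightarrow>
      (\<forall>\<tau>. is_strategy \<tau> \<longrightarrow> \<tau> True * GH + \<tau> False * GL \<le> f True * GH + f False * GL)"
    unfolding is_BNE_def using payoff f B by (auto dest: spec[of _ 0])
  also have "\<dots> \<longleftrightarrow> (\<forall>t. 0 \<le> t \<longrightarrow> t \<le> 1 \<longrightarrow> t * GH \<le> f True * GH)
      \<and> (\<forall>u. 0 \<le> u \<longrightarrow> u \<le> 1 \<longrightarrow> u * GL \<le> f False * GL)"
  proof safe
    fix t :: real
    assume all: "\<forall>\<tau>. is_strategy \<tau> \<longrightarrow> \<tau> True * GH + \<tau> False * GL \<le> f True * GH + f False * GL"
      and t: "0 \<le> t" "t \<le> 1"
    have "is_strategy (\<lambda>s. if s then t else f False)" "is_strategy (\<lambda>s. if s then f True else t)"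
      using t f01 by (auto simp: is_strategy_def)
    from all[rule_format, OF this(1)] all[rule_format, OF this(2)]
    show "t * GH \<le> f True * GH" "t * GL \<le> f False * GL" by simp_all
  next
    fix \<tau> assume "is_strategy \<tau>" and "\<forall>t. 0 \<le> t \<longrightarrow> t \<le> 1 \<longrightarrow> t * GH \<le> f True * GH"
      and "\<forall>u. 0 \<le> u \<longrightarrow> u \<le> 1 \<longrightarrow> u * GL \<le> f False * GL"
    thus "\<tau> True * GH + \<tau> False * GL \<le> f True * GH + f False * GL"
      unfolding is_strategy_def by (meson add_mono)
  qed
  finally show ?thesis using f01 by (simp add: linear_max_unit_interval_iff)
qed

text \<open>Given that players always contribute after a high signal, \<open>l\<close> is an equilibrium probability
  of contributing after a low signal: either \<open>l = 0\<close> is a best response, or \<open>l\<close> is interior and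
  makes the low-signal player indifferent.\<close>

definition is_low_signal_mix :: "real \<Rightarrow> nat \<Rightarrow> nat \<Rightarrow> real \<Rightarrow> bool" where
  "is_low_signal_mix p m k l \<longleftrightarrow>
     (l = 0 \<and> gain_low p m k 1 0 \<le> 0) \<or> (0 < l \<and> l < 1 \<and> gain_low p m k 1 l = 0)"

lemma low_signal_mix_exists:
  assumes p: "1/2 < p" and k: "k \<le> m"
  shows "\<exists>l. is_low_signal_mix p m k l"
proof (cases "gain_low p m k 1 0 \<le> 0")
  case True thus ?thesis unfolding is_low_signal_mix_def by auto
next
  case False
  have at_1: "gain_low p m k 1 1 = 1 - 2*p" using binom_tail_at_1[OF k] by (simp add: gain_low_def)
  have "continuous_on {0..1} (gain_low p m k 1)"
    unfolding gain_low_def by (intro continuous_intros binom_tail_continuous_on[THEN continuous_on_compose2]) auto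
  then obtain l where l: "0 \<le> l" "l \<le> 1" "gain_low p m k 1 l = 0"
    using IVT2'[of "gain_low p m k 1" 1 0 0] False at_1 p by auto
  hence "0 < l \<and> l < 1" using False at_1 p by (auto simp: order.order_iff_strict)
  thus ?thesis using l unfolding is_low_signal_mix_def by blast
qed

lemma low_signal_mix_unique:
  assumes p: "1/2 < p" "p < 1" and k: "k \<le> m"
    and l: "is_low_signal_mix p m k l" "is_low_signal_mix p m k l'"
  shows "l = l'"
proof (cases "k = 0")
  case True
  hence "gain_low p m k 1 x = 1 - 2*p" for x by (simp add: gain_low_def)
  thus ?thesis using l p unfolding is_low_signal_mix_def by auto
next
  case False
  have no_smaller: False if "l1 < l2" "is_low_signal_mix p m k l1" "is_low_signal_mix p m k l2" for l1 l2
  proof -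
    let ?A1 = "binom_tail m (p + (1-p)*l1) k" and ?A2 = "binom_tail m (p + (1-p)*l2) k"
    let ?B1 = "binom_tail m (1-p + p*l1) k" and ?B2 = "binom_tail m (1-p + p*l2) k"
    have l2: "0 < l2" "l2 < 1" "p * ?B2 = (1-p) * ?A2"
      using that unfolding is_low_signal_mix_def gain_low_def by auto
    have l1: "0 \<le> l1" "(1-p) * ?A1 \<le> p * ?B1"
      using that unfolding is_low_signal_mix_def gain_low_def by auto
    have A2: "0 \<le> ?A2" using signal_mix_bounds(3,4)[OF p, of l2] l2 p by (intro binom_tail_nonneg) auto
    have "p * (?A1 * ?B2) = ?A1 * (p * ?B2)" by (simp only: mult_ac)
    also have "\<dots> = ((1-p) * ?A1) * ?A2" unfolding l2(3) by (simp only: mult_ac)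
    also have "\<dots> \<le> (p * ?B1) * ?A2" by (rule mult_right_mono[OF l1(2) A2])
    finally have "p * (?A1 * ?B2) \<le> p * (?A2 * ?B1)" by (simp only: mult_ac)
    moreover have "?A2 * ?B1 < ?A1 * ?B2"
      using binom_tail_odds_strict_antimono[OF _ k p l1(1) that(1) l2(2)] False by simp
    ultimately show False using p by (simp add: mult_le_cancel_left)
  qed
  show ?thesis using no_smaller[of l l'] no_smaller[of l' l] l by (cases l l' rule: linorder_cases) auto
qed

lemma gain_high_pos:
  assumes p: "1/2 < p" "p < 1" and hl: "0 \<le> l" "l \<le> h" "h \<le> 1" "0 < h" and k: "k \<le> m"
  shows "0 < gain_high p m k h l"
proof -
  define a b where "a = p*h + (1-p)*l" and "b = (1-p)*h + p*l"
  have "0 < (1-p)*h" "0 \<le> p*l" "0 \<le> (2*p-1)*(h-l)" using p hl by auto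
  moreover have "a - b = (2*p-1)*(h-l)" unfolding a_def b_def by (simp add: algebra_simps)
  moreover have "a \<le> 1" using convex_comb_in_unit_interval[of p h l] p hl unfolding a_def by auto
  ultimately have ab: "0 < b" "b \<le> a" "a \<le> 1" unfolding b_def by linarith+
  have "0 < binom_tail m b k" using ab k by (intro binom_tail_pos) auto
  moreover have "binom_tail m b k \<le> binom_tail m a k" using ab by (intro binom_tail_mono) auto
  ultimately have "0 < (2*p-1) * binom_tail m b k" "(2*p-1) * binom_tail m b k \<le> gain_high p m k h l"
    using p unfolding gain_high_def a_def[symmetric] b_def[symmetric] by (auto simp: algebra_simps)
  thus ?thesis by linarith
qed

lemma gain_low_less_gain_high:
  assumes p: "1/2 < p" "p < 1" and hl: "0 \<le> h" "h \<le> 1" "0 < l" "l \<le> 1" and k: "k \<le> m"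
  shows "gain_low p m k h l < gain_high p m k h l"
proof -
  define a b where "a = p*h + (1-p)*l" and "b = (1-p)*h + p*l"
  have "0 \<le> p*h" "0 < (1-p)*l" using p hl by auto
  hence "0 < a" unfolding a_def by linarith
  moreover have "a \<le> 1" "0 \<le> b" "b \<le> 1"
    using hl p convex_comb_in_unit_interval[of p h l] convex_comb_in_unit_interval[of "1-p" h l]
    unfolding a_def b_def by auto
  ultimately have "0 < binom_tail m a k + binom_tail m b k"
    using k by (intro add_pos_nonneg binom_tail_pos binom_tail_nonneg) auto
  hence "0 < (2*p-1) * (binom_tail m a k + binom_tail m b k)" using p by simp
  moreover have "gain_high p m k h l - gain_low p m k h l = (2*p-1) * (binom_tail m a k + binom_tail m b k)"
    unfolding gain_high_def gain_low_def a_def b_def by (simp add: algebra_simps)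
  ultimately show ?thesis by linarith
qed

lemma sym_nontrivial_BNE_imp_low_signal_mix:
  assumes p: "1/2 < p" "p < 1" and B: "1 \<le> B" "B \<le> n" and f: "is_strategy f"
    and bne: "is_BNE p B n (\<lambda>_. f)" and nt: "nontrivial p B n (\<lambda>_. f)"
  shows "f True = 1 \<and> is_low_signal_mix p (n-1) (B-1) (f False)"
proof -
  define h l where "h = f True" and "l = f False"
  define GH GL where "GH = gain_high p (n-1) (B-1) h l" and "GL = gain_low p (n-1) (B-1) h l"
  have p01: "0 \<le> p" "p \<le> 1" and k: "B-1 \<le> n-1" using p B by auto
  have hl: "0 \<le> h" "h \<le> 1" "0 \<le> l" "l \<le> 1" using f unfolding is_strategy_def h_def l_def by auto
  have opt: "(0 < GH \<longrightarrow> h = 1) \<and> (GL < 0 \<longrightarrow> l = 0) \<and> (0 < GL \<longrightarrow> l = 1)"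
    using bne is_BNE_sym_iff[OF p01 f B] unfolding GH_def GL_def h_def l_def by auto
  have "0 < h \<or> 0 < l"
  proof (rule ccontr)
    assume "\<not> (0 < h \<or> 0 < l)"
    hence "h = 0" "l = 0" using hl by auto
    thus False
      using nt nontrivial_sym_iff[OF p01 f] binom_tail_at_0[OF B(1)]
      unfolding contrib_prob_True contrib_prob_False h_def l_def by simp
  qed
  have "0 < GH"
  proof (cases "l = 0")
    case True
    thus ?thesis using \<open>0 < h \<or> 0 < l\<close> hl k unfolding GH_def by (intro gain_high_pos[OF p]) auto
  next
    case False
    hence "GL < GH" using hl k unfolding GH_def GL_def by (intro gain_low_less_gain_high[OF p]) auto
    moreover have "0 \<le> GL" using opt False by force
    ultimately show ?thesis by linarith
  qed
  hence h1: "h = 1" using opt by simp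
  have "l \<noteq> 1"
  proof
    assume "l = 1"
    hence "GL = 1 - 2*p" using binom_tail_at_1[OF k] h1 unfolding GL_def gain_low_def by simp
    thus False using opt p \<open>l = 1\<close> by auto
  qed
  hence "is_low_signal_mix p (n-1) (B-1) l"
    using opt hl h1 unfolding is_low_signal_mix_def GL_def by (cases "l = 0") auto
  thus ?thesis using h1 unfolding h_def l_def by simp
qed

lemma low_signal_mix_imp_sym_nontrivial_BNE:
  assumes p: "1/2 < p" "p < 1" and B: "1 \<le> B" "B \<le> n"
    and f: "f True = 1" "is_low_signal_mix p (n-1) (B-1) (f False)"
  shows "is_strategy f \<and> is_BNE p B n (\<lambda>_. f) \<and> nontrivial p B n (\<lambda>_. f)"
proof -
  have p01: "0 \<le> p" "p \<le> 1" and k: "B-1 \<le> n-1" using p B by auto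
  have l: "0 \<le> f False" "f False < 1" using f(2) unfolding is_low_signal_mix_def by auto
  have strat: "is_strategy f" unfolding is_strategy_def using f(1) l by (metis (full_types) order.refl less_imp_le zero_le_one)
  have "0 < gain_high p (n-1) (B-1) (f True) (f False)"
    using l f(1) k by (intro gain_high_pos[OF p]) auto
  hence bne: "is_BNE p B n (\<lambda>_. f)"
    using f l unfolding is_BNE_sym_iff[OF p01 strat B] is_low_signal_mix_def by auto
  have "0 < contrib_prob p True f" using f(1) l p unfolding contrib_prob_True by (simp add: add_pos_nonneg)
  moreover have "contrib_prob p True f \<le> 1" "0 \<le> contrib_prob p False f" "contrib_prob p False f \<le> 1"
    using contrib_prob_bounds[OF p01 strat] by auto
  ultimately have "nontrivial p B n (\<lambda>_. f)"
    unfolding nontrivial_sym_iff[OF p01 strat] using B by (intro add_pos_nonneg binom_tail_pos binom_tail_nonneg)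
  thus ?thesis using strat bne by simp
qed

lemma sym_eq_spec:
  assumes p: "1/2 < p" "p < 1" and B: "1 \<le> B" "B \<le> n"
  shows "is_strategy (sym_eq p B n)" "sym_eq p B n True = 1"
    "is_low_signal_mix p (n-1) (B-1) (sym_eq p B n False)"
proof -
  obtain l where l: "is_low_signal_mix p (n-1) (B-1) l"
    using low_signal_mix_exists[OF p(1)] B by fastforce
  define f where "f = (\<lambda>s::bool. if s then 1 else l)"
  have eq: "is_strategy g \<and> is_BNE p B n (\<lambda>_. g) \<and> nontrivial p B n (\<lambda>_. g) \<longleftrightarrow> g = f" for g
  proof
    assume "is_strategy g \<and> is_BNE p B n (\<lambda>_. g) \<and> nontrivial p B n (\<lambda>_. g)"
    hence g: "g True = 1" "is_low_signal_mix p (n-1) (B-1) (g False)"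
      using sym_nontrivial_BNE_imp_low_signal_mix[OF p B] by blast+
    have "g False = l" using low_signal_mix_unique[OF p _ g(2) l] B by simp
    thus "g = f" using g(1) unfolding f_def by (auto simp: fun_eq_iff)
  next
    assume "g = f"
    thus "is_strategy g \<and> is_BNE p B n (\<lambda>_. g) \<and> nontrivial p B n (\<lambda>_. g)"
      using low_signal_mix_imp_sym_nontrivial_BNE[OF p B] l unfolding f_def by simp
  qed
  have "sym_eq p B n = f" unfolding sym_eq_def eq by simp
  thus "is_strategy (sym_eq p B n)" "sym_eq p B n True = 1"
    "is_low_signal_mix p (n-1) (B-1) (sym_eq p B n False)"
    using eq[of f] l unfolding f_def by simp_all
qed

section \<open>The correctness index\<close>

lemma theta_eq_low_signal_mix:
  assumes p: "1/2 < p" "p < 1" and B: "1 \<le> B" "B \<le> n"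
  defines "l \<equiv> sym_eq p B n False"
  shows "theta p B n = 1/2 * binom_tail n (p + (1-p)*l) B + 1/2 * (1 - binom_tail n (1-p + p*l) B)"
  using theta_eq_binom_tail[of p B n] sym_eq_spec[OF p B] p
  unfolding l_def contrib_prob_True contrib_prob_False by simp

lemma binom_tail_pred:
  "1 \<le> B \<Longrightarrow> B \<le> n \<Longrightarrow> binom_tail n x B = binom_tail (n-1) x (B-1) - (1-x) * binom_term (n-1) x (B-1)"
  using binom_tail_Suc_Suc[of "B-1" "n-1" x] by simp

lemma theta_upper:
  assumes p: "1/2 < p" "p < 1" and B: "1 \<le> B" "B \<le> n"
  shows "\<exists>x. 1-p \<le> x \<and> x \<le> 1 \<and>
           theta p B n \<le> (3*p-1)/(2*p) + 1/2 * ((1-x) * binom_term (n-1) x (B-1))"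
proof -
  define l where "l = sym_eq p B n False"
  define a b where "a = p + (1-p)*l" and "b = 1-p + p*l"
  define Qa Qb where "Qa = binom_tail (n-1) a (B-1)" and "Qb = binom_tail (n-1) b (B-1)"
  define Pa Pb where "Pa = (1-a) * binom_term (n-1) a (B-1)" and "Pb = (1-b) * binom_term (n-1) b (B-1)"
  define T where "T = (3*p-1)/(2*p)"
  have mix: "is_low_signal_mix p (n-1) (B-1) l" using sym_eq_spec[OF p B] unfolding l_def by simp
  hence "0 \<le> l" "l \<le> 1" unfolding is_low_signal_mix_def by auto
  note signal_mix_bounds[OF p this]
  hence ab: "0 \<le> a" "a \<le> 1" "1-p \<le> b" "b \<le> 1"
    using p unfolding a_def b_def by linarith+
  have th: "theta p B n = 1/2 * (Qa - Pa) + 1/2 * (1 - (Qb - Pb))"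
    using theta_eq_low_signal_mix[OF p B] unfolding binom_tail_pred[OF B] Qa_def Qb_def Pa_def Pb_def
      l_def[symmetric] a_def[symmetric] b_def[symmetric] .
  have Pa: "0 \<le> Pa" unfolding Pa_def using ab by (intro mult_nonneg_nonneg binom_term_nonneg) auto
  have "(1-p) * Qa \<le> p * Qb"
    using mix unfolding is_low_signal_mix_def gain_low_def a_def b_def Qa_def Qb_def by auto
  hence "p * (Qa - Qb) \<le> (2*p-1) * Qa" by (simp add: algebra_simps)
  also have "\<dots> \<le> 2*p-1" unfolding Qa_def using p ab by (intro mult_left_le binom_tail_le_1) auto
  finally have "Qa - Qb \<le> (2*p-1)/p" using p by (simp add: field_simps)
  moreover have "T = 1/2 + 1/2 * ((2*p-1)/p)" unfolding T_def using p by (simp add: field_simps)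
  ultimately have "theta p B n \<le> T + 1/2 * Pb" using th Pa by argo
  thus ?thesis using ab unfolding Pb_def T_def by (intro exI[of _ b]) auto
qed

lemma theta_lower:
  assumes p: "1/2 < p" "p < 1" and B: "1 \<le> B" "B \<le> n"
  shows "1/2 + 1/2 * (binom_tail n p B - (1-p)/p - binom_tail (n-1) (1-p) (B-1)) \<le> theta p B n"
proof -
  define l where "l = sym_eq p B n False"
  define a b where "a = p + (1-p)*l" and "b = 1-p + p*l"
  define Qb where "Qb = binom_tail (n-1) b (B-1)"
  define r where "r = (1-p)/p"
  have mix: "is_low_signal_mix p (n-1) (B-1) l" using sym_eq_spec[OF p B] unfolding l_def by simp
  hence "0 \<le> l" "l \<le> 1" unfolding is_low_signal_mix_def by auto
  note signal_mix_bounds[OF p this]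
  hence ab: "p \<le> a" "a \<le> 1" "1-p \<le> b" "b \<le> 1"
    using p unfolding a_def b_def by linarith+
  have "binom_tail n p B \<le> binom_tail n a B" using ab p by (intro binom_tail_mono) auto
  moreover have "binom_tail n b B \<le> Qb"
    using ab binom_term_nonneg[of b "n-1" "B-1"] unfolding binom_tail_pred[OF B] Qb_def
    by (simp add: mult_nonneg_nonneg)
  moreover have "Qb \<le> r + binom_tail (n-1) (1-p) (B-1)"
  proof (cases "l = 0")
    case True
    thus ?thesis using p unfolding b_def Qb_def r_def by simp
  next
    case False
    hence "p * Qb = (1-p) * binom_tail (n-1) a (B-1)"
      using mix unfolding is_low_signal_mix_def gain_low_def a_def b_def Qb_def by auto
    also have "\<dots> \<le> 1-p" using p ab by (intro mult_left_le binom_tail_le_1) auto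
    finally have "Qb \<le> r" unfolding r_def using p by (simp add: field_simps)
    moreover have "0 \<le> binom_tail (n-1) (1-p) (B-1)" using p by (intro binom_tail_nonneg) auto
    ultimately show ?thesis by linarith
  qed
  moreover have "theta p B n = 1/2 * binom_tail n a B + 1/2 * (1 - binom_tail n b B)"
    using theta_eq_low_signal_mix[OF p B] unfolding l_def[symmetric] a_def[symmetric] b_def[symmetric] .
  ultimately show ?thesis unfolding r_def[symmetric] by argo
qed

lemma max_theta_eventually_le:
  assumes p: "1/2 < p" "p < 1" and e: "0 < \<epsilon>"
  shows "\<forall>\<^sub>F n in sequentially. Max ((\<lambda>B. theta p B n) ` {1..n}) \<le> (3*p-1)/(2*p) + \<epsilon>"
proof -
  obtain M where M: "\<And>m x k. M \<le> m \<Longrightarrow> 1-p \<le> x \<Longrightarrow> x \<le> 1 \<Longrightarrow> k \<le> m \<Longrightarrow> (1-x) * binom_term m x k \<le> 2*\<epsilon>"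
    using binom_term_uniformly_small[of "1-p" "2*\<epsilon>"] p e unfolding eventually_sequentially by auto
  have "Max ((\<lambda>B. theta p B n) ` {1..n}) \<le> (3*p-1)/(2*p) + \<epsilon>" if n: "M + 1 \<le> n" for n
  proof -
    have "theta p B n \<le> (3*p-1)/(2*p) + \<epsilon>" if "B \<in> {1..n}" for B
    proof -
      have "1 \<le> B" "B \<le> n" using that by auto
      then obtain x where x: "1-p \<le> x" "x \<le> 1"
        and th: "theta p B n \<le> (3*p-1)/(2*p) + 1/2 * ((1-x) * binom_term (n-1) x (B-1))"
        using theta_upper[OF p] by blast
      have "(1-x) * binom_term (n-1) x (B-1) \<le> 2*\<epsilon>" using M x n that by auto
      thus ?thesis using th by linarith
    qed
    thus ?thesis using n by (subst Max_le_iff) auto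
  qed
  thus ?thesis unfolding eventually_sequentially by blast
qed

lemma max_theta_ge_majority_threshold:
  assumes p: "1/2 < p" "p < 1" and n: "1 \<le> n"
  shows "1/2 + 1/2 * (binom_tail n p (n div 2 + 1) - (1-p)/p - binom_tail (n-1) (1-p) (n div 2))
           \<le> Max ((\<lambda>B. theta p B n) ` {1..n})"
proof -
  have B: "1 \<le> n div 2 + 1" "n div 2 + 1 \<le> n" using n by auto
  hence "theta p (n div 2 + 1) n \<le> Max ((\<lambda>B. theta p B n) ` {1..n})" by (intro Max_ge) auto
  thus ?thesis using theta_lower[OF p B] by simp
qed

lemma max_theta_eventually_gt:
  assumes p: "1/2 < p" "p < 1" and a: "a < (3*p-1)/(2*p)"
  shows "\<forall>\<^sub>F n in sequentially. a < Max ((\<lambda>B. theta p B n) ` {1..n})"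
proof -
  let ?L = "\<lambda>n. 1/2 + 1/2 * (binom_tail n p (n div 2 + 1) - (1-p)/p - binom_tail (n-1) (1-p) (n div 2))"
  have "?L \<longlonglongrightarrow> 1/2 + 1/2 * (1 - (1-p)/p - 0)"
    using p by (intro tendsto_intros binom_tail_majority_tendsto_1 binom_tail_majority_tendsto_0) auto
  moreover have "1/2 + 1/2 * (1 - (1-p)/p - 0) = (3*p-1)/(2*p)" using p by (simp add: field_simps)
  ultimately have "\<forall>\<^sub>F n in sequentially. a < ?L n" using a by (auto dest: order_tendstoD(1))
  moreover have "\<forall>\<^sub>F n in sequentially. 1 \<le> n" by (rule eventually_ge_at_top)
  ultimately show ?thesis by eventually_elim (use max_theta_ge_majority_threshold[OF p] in fastforce)
qed

theorem theorem2:
  fixes p :: real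
  assumes "1/2 < p" and "p < 1"
  shows "(\<lambda>n. Max ((\<lambda>B. theta p B n) ` {1..n})) \<longlonglongrightarrow> (3*p - 1) / (2*p)
         \<and> (3*p - 1) / (2*p) < 1"
proof
  have p: "1/2 < p" "p < 1" using assms by auto
  show "(\<lambda>n. Max ((\<lambda>B. theta p B n) ` {1..n})) \<longlonglongrightarrow> (3*p - 1) / (2*p)"
  proof (rule order_tendstoI)
    fix a assume "a < (3*p - 1) / (2*p)"
    thus "\<forall>\<^sub>F n in sequentially. a < Max ((\<lambda>B. theta p B n) ` {1..n})"
      by (rule max_theta_eventually_gt[OF p])
  next
    fix a assume a: "(3*p - 1) / (2*p) < a"
    hence "\<forall>\<^sub>F n in sequentially. Max ((\<lambda>B. theta p B n) ` {1..n}) \<le> (3*p-1)/(2*p) + (a - (3*p-1)/(2*p))/2"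
      by (intro max_theta_eventually_le[OF p]) simp
    thus "\<forall>\<^sub>F n in sequentially. Max ((\<lambda>B. theta p B n) ` {1..n}) < a"
      by eventually_elim (use a in argo)
  qed
next
  show "(3*p - 1) / (2*p) < 1" using assms by (simp add: field_simps)
qed

end
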